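(* Let $m\ge 1$, let $P_1\ge\dots\ge P_{2^m}>0$ and $P_1^d\ge\dots\ge P^d_{2^m}>0$, and let $N_i^e(t),N_i^d(t)$, $1\le i\le 2^m-1$, be positive integers. Let $\{i,i+1\}^e$ and $\{i,i+1\}^d$, $1\le i\le 2^m-1$, be events in a probability space such that $\Pr\{\{i,i+1\}^e\}=(P_{i+1}/P_i)^{N_i^e(t)}$ and $\Pr\{\{i,i+1\}^d\}=(P^d_{i+1}/P^d_i)^{N_i^d(t)}$ for all $i$, and such that each of the four families $\{\{2i-1,2i\}^e\}_{i=1}^{2^{m-1}}$, $\{\{2i,2i+1\}^e\}_{i=1}^{2^{m-1}-1}$, $\{\{2i-1,2i\}^d\}_{i=1}^{2^{m-1}}$, $\{\{2i,2i+1\}^d\}_{i=1}^{2^{m-1}-1}$ consists of mutually independent events. Let $W=\left(\bigcup_{i=1}^{2^m-1}\{i,i+1\}^e\right)\cup\left(\bigcup_{i=1}^{2^m-1}\{i,i+1\}^d\right)$ and $P_W=\Pr\{W\}$. Then $$P_W\le 4-\prod_{i=1}^{2^{m-1}}\left(1-\left(\tfrac{P_{2i}}{P_{2i-1}}\right)^{N^e_{2i-1}(t)}\right)-\prod_{i=1}^{2^{m-1}-1}\left(1-\left(\tfrac{P_{2i+1}}{P_{2i}}\right)^{N^e_{2i}(t)}\right)-\prod_{i=1}^{2^{m-1}}\left(1-\left(\tfrac{P^d_{2i}}{P^d_{2i-1}}\right)^{N^d_{2i-1}(t)}\right)-\prod_{i=1}^{2^{m-1}-1}\left(1-\left(\t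frac{P^d_{2i+1}}{P^d_{2i}}\right)^{N^d_{2i}(t)}\right).$$
   Context: Interpretation: for a rate-1 direct shaping code with parsing length $m$ whose dictionary is stable at time $t$ (encoder counts $n_1^e(t)>\dots>n^e_{2^m}(t)$ and decoder counts $n_1^d(t)>\dots>n^d_{2^m}(t)$), $N_i^e(t)=n_i^e(t)-n_{i+1}^e(t)$, $N_i^d(t)=n_i^d(t)-n_{i+1}^d(t)$; $\{i,i+1\}^e$ (resp. $\{i,i+1\}^d$) is the event that the encoder (resp. decoder) counts of the $i$th and $(i+1)$st words become equal at some future time; $P_i$ are the input word probabilities and $P_i^d=\sum_j\rho^{d(i,j)}(1-\rho)^{m-d(i,j)}P_j$ (with $d$ the Hamming distance, $\rho$ the BSC crossover probability) the decoder output probabilities. The paper treats recurrences between non-overlapping adjacent pairs as independent and uses the one-dimensional gambler's-ruin probabilities for each pair; these are stated as hypotheses in the claim. *)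

theory Defs
  imports "HOL-Probability.Probability"
begin

end

theory Submission
  imports Defs
begin

text \<open>Split the adjacent pairs $\{i,i+1\}$ into those with $i$ odd and those with $i$ even.
  Within each class the events are independent, so their union has probability one minus the
  product of the complementary probabilities; subadditivity over the two classes of encoder and
  of decoder events gives the bound.\<close>

lemma (in prob_space) indep_events_compl:
  assumes "indep_events A I"
  shows "indep_events (\<lambda>i. space M - A i) I"
proof -
  have "indep_sets (\<lambda>i. sigma_sets (space M) {A i}) I"
    using assms unfolding indep_events_def_alt
    by (rule indep_sets_sigma) (auto simp: Int_stable_def)
  then have "indep_sets (\<lambda>i. {space M - A i}) I"
    by (rule indep_sets_mono_sets) (auto intro: sigma_sets.Compl sigma_sets.Basic)
  then show ?thesis
    unfolding indep_events_def_alt .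
qed

lemma (in prob_space) prob_UN_indep_events:
  assumes "finite I" and indep: "indep_events A I"
  shows "prob (\<Union>i\<in>I. A i) = 1 - (\<Prod>i\<in>I. 1 - prob (A i))"
proof (cases "I = {}")
  case False
  have events: "\<And>i. i \<in> I \<Longrightarrow> A i \<in> events"
    using indep by (auto simp: indep_events_def)
  have "prob (space M - (\<Union>i\<in>I. A i)) = prob (\<Inter>i\<in>I. space M - A i)"
    using False by (intro arg_cong[where f = prob]) auto
  also have "\<dots> = (\<Prod>i\<in>I. prob (space M - A i))"
    using indep_events_compl[OF indep] \<open>finite I\<close> False by (auto simp: indep_events_def)
  also have "\<dots> = (\<Prod>i\<in>I. 1 - prob (A i))"
    using events by (intro prod.cong) (auto simp: prob_compl)
  finally show ?thesis
    using events \<open>finite I\<close> by (simp add: prob_compl sets.finite_UN)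
qed simp

lemma UN_atLeastAtMost_odd_even:
  fixes K :: nat
  shows "(\<Union>i\<in>{1..2*K - 1}. E i) = (\<Union>i\<in>{1..K}. E (2*i - 1)) \<union> (\<Union>i\<in>{1..K - 1}. E (2*i))"
  (is "?lhs = ?odd \<union> ?even")
proof
  show "?lhs \<subseteq> ?odd \<union> ?even"
  proof
    fix x assume "x \<in> ?lhs"
    then obtain j where j: "j \<in> {1..2*K - 1}" "x \<in> E j" by blast
    show "x \<in> ?odd \<union> ?even"
    proof (cases "even j")
      case True
      then obtain i where "j = 2*i" by blast
      with j show ?thesis by auto
    next
      case False
      then obtain i where "j = 2*i + 1" by (rule oddE)
      with j show ?thesis by (intro UnI1 UN_I[of "i + 1"]) auto
    qed
  qed
next
  show "?odd \<union> ?even \<subseteq> ?lhs"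
  proof (intro Un_least UN_least)
    fix i assume "i \<in> {1..K}"
    then show "E (2*i - 1) \<subseteq> ?lhs" by (intro UN_upper) auto
  next
    fix i assume "i \<in> {1..K - 1}"
    then show "E (2*i) \<subseteq> ?lhs" by (intro UN_upper) auto
  qed
qed

lemma (in prob_space) prob_UN_odd_even_indep_le:
  fixes K :: nat
  assumes events: "\<And>i. i \<in> {1..2*K - 1} \<Longrightarrow> E i \<in> events"
    and indep_odd: "indep_events (\<lambda>i. E (2*i - 1)) {1..K}"
    and indep_even: "indep_events (\<lambda>i. E (2*i)) {1..K - 1}"
  shows "prob (\<Union>i\<in>{1..2*K - 1}. E i)
    \<le> 2 - (\<Prod>i=1..K. 1 - prob (E (2*i - 1))) - (\<Prod>i=1..K - 1. 1 - prob (E (2*i)))"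
proof -
  have "E (2*i - 1) \<in> events" if "i \<in> {1..K}" for i
    using that by (intro events) auto
  moreover have "E (2*i) \<in> events" if "i \<in> {1..K - 1}" for i
    using that by (intro events) auto
  ultimately have "prob (\<Union>i\<in>{1..2*K - 1}. E i)
      \<le> prob (\<Union>i\<in>{1..K}. E (2*i - 1)) + prob (\<Union>i\<in>{1..K - 1}. E (2*i))"
    unfolding UN_atLeastAtMost_odd_even by (intro measure_subadditive sets.finite_UN) auto
  then show ?thesis
    using prob_UN_indep_events[OF _ indep_odd] prob_UN_indep_events[OF _ indep_even] by simp
qed

lemma (in prob_space) prob_UN_adjacent_ratio_events_le:
  fixes K :: nat and Q :: "nat \<Rightarrow> real" and N :: "nat \<Rightarrow> nat"
  assumes events: "\<And>i. i \<in> {1..2*K - 1} \<Longrightarrow> E i \<in> events"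
    and prob_E: "\<And>i. i \<in> {1..2*K - 1} \<Longrightarrow> prob (E i) = (Q (Suc i) / Q i) ^ N i"
    and indep_odd: "indep_events (\<lambda>i. E (2*i - 1)) {1..K}"
    and indep_even: "indep_events (\<lambda>i. E (2*i)) {1..K - 1}"
  shows "prob (\<Union>i\<in>{1..2*K - 1}. E i)
    \<le> 2 - (\<Prod>i=1..K. 1 - (Q (2*i) / Q (2*i - 1)) ^ N (2*i - 1))
        - (\<Prod>i=1..K - 1. 1 - (Q (2*i + 1) / Q (2*i)) ^ N (2*i))"
proof -
  have "prob (E (2*i - 1)) = (Q (2*i) / Q (2*i - 1)) ^ N (2*i - 1)" if "i \<in> {1..K}" for i
  proof -
    from that have "2*i - 1 \<in> {1..2*K - 1}" and "Suc (2*i - 1) = 2*i" by auto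
    with prob_E[of "2*i - 1"] show ?thesis by simp
  qed
  then have "(\<Prod>i=1..K. 1 - prob (E (2*i - 1))) = (\<Prod>i=1..K. 1 - (Q (2*i) / Q (2*i - 1)) ^ N (2*i - 1))"
    by (intro prod.cong) auto
  moreover have "(\<Prod>i=1..K - 1. 1 - prob (E (2*i))) = (\<Prod>i=1..K - 1. 1 - (Q (2*i + 1) / Q (2*i)) ^ N (2*i))"
    using prob_E by (intro prod.cong) auto
  ultimately show ?thesis
    using prob_UN_odd_even_indep_le[OF events indep_odd indep_even] by simp
qed

theorem lemma2:
  fixes M :: "'a measure"
    and m :: nat
    and P Pd :: "nat \<Rightarrow> real"
    and Ne Nd :: "nat \<Rightarrow> nat"
    and Ee Ed :: "nat \<Rightarrow> 'a set"
  assumes "prob_space M"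
    and "m \<ge> 1"
    and P_mono: "\<And>i. 1 \<le> i \<Longrightarrow> i < 2^m \<Longrightarrow> P (Suc i) \<le> P i"
    and P_pos: "P (2^m) > 0"
    and Pd_mono: "\<And>i. 1 \<le> i \<Longrightarrow> i < 2^m \<Longrightarrow> Pd (Suc i) \<le> Pd i"
    and Pd_pos: "Pd (2^m) > 0"
    and Ne_pos: "\<And>i. 1 \<le> i \<Longrightarrow> i < 2^m \<Longrightarrow> Ne i > 0"
    and Nd_pos: "\<And>i. 1 \<le> i \<Longrightarrow> i < 2^m \<Longrightarrow> Nd i > 0"
    and Ee_ev: "\<And>i. 1 \<le> i \<Longrightarrow> i < 2^m \<Longrightarrow> Ee i \<in> sets M"
    and Ed_ev: "\<And>i. 1 \<le> i \<Longrightarrow> i < 2^m \<Longrightarrow> Ed i \<in> sets M"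
    and Ee_prob: "\<And>i. 1 \<le> i \<Longrightarrow> i < 2^m \<Longrightarrow>
                    measure M (Ee i) = (P (Suc i) / P i) ^ Ne i"
    and Ed_prob: "\<And>i. 1 \<le> i \<Longrightarrow> i < 2^m \<Longrightarrow>
                    measure M (Ed i) = (Pd (Suc i) / Pd i) ^ Nd i"
    and ind_e1: "prob_space.indep_events M (\<lambda>i. Ee (2*i - 1)) {1..2^(m-1)}"
    and ind_e2: "prob_space.indep_events M (\<lambda>i. Ee (2*i)) {1..2^(m-1) - 1}"
    and ind_d1: "prob_space.indep_events M (\<lambda>i. Ed (2*i - 1)) {1..2^(m-1)}"
    and ind_d2: "prob_space.indep_events M (\<lambda>i. Ed (2*i)) {1..2^(m-1) - 1}"
  shows "measure M ((\<Union>i\<in>{1..2^m - 1}. Ee i) \<union> (\<Union>i\<in>{1..2^m - 1}. Ed i))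
    \<le> 4 - (\<Prod>i=1..2^(m-1). 1 - (P (2*i) / P (2*i - 1)) ^ Ne (2*i - 1))
        - (\<Prod>i=1..2^(m-1) - 1. 1 - (P (2*i + 1) / P (2*i)) ^ Ne (2*i))
        - (\<Prod>i=1..2^(m-1). 1 - (Pd (2*i) / Pd (2*i - 1)) ^ Nd (2*i - 1))
        - (\<Prod>i=1..2^(m-1) - 1. 1 - (Pd (2*i + 1) / Pd (2*i)) ^ Nd (2*i))"
proof -
  interpret prob_space M by fact
  define K :: nat where "K = 2^(m-1)"
  have two_pow_m: "2^m = 2*K"
    using \<open>m \<ge> 1\<close> unfolding K_def by (simp flip: power_Suc)
  have Ee_facts: "Ee i \<in> events" "prob (Ee i) = (P (Suc i) / P i) ^ Ne i"
    and Ed_facts: "Ed i \<in> events" "prob (Ed i) = (Pd (Suc i) / Pd i) ^ Nd i"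
    if "i \<in> {1..2*K - 1}" for i
    using that two_pow_m Ee_ev Ed_ev Ee_prob Ed_prob by auto
  have "measure M ((\<Union>i\<in>{1..2^m - 1}. Ee i) \<union> (\<Union>i\<in>{1..2^m - 1}. Ed i))
      \<le> prob (\<Union>i\<in>{1..2*K - 1}. Ee i) + prob (\<Union>i\<in>{1..2*K - 1}. Ed i)"
    unfolding two_pow_m using Ee_facts Ed_facts by (intro measure_subadditive sets.finite_UN) auto
  also have "\<dots> \<le> (2 - (\<Prod>i=1..K. 1 - (P (2*i) / P (2*i - 1)) ^ Ne (2*i - 1))
        - (\<Prod>i=1..K - 1. 1 - (P (2*i + 1) / P (2*i)) ^ Ne (2*i)))
      + (2 - (\<Prod>i=1..K. 1 - (Pd (2*i) / Pd (2*i - 1)) ^ Nd (2*i - 1))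
        - (\<Prod>i=1..K - 1. 1 - (Pd (2*i + 1) / Pd (2*i)) ^ Nd (2*i)))"
    using ind_e1 ind_e2 ind_d1 ind_d2 Ee_facts Ed_facts unfolding K_def
    by (intro add_mono prob_UN_adjacent_ratio_events_le) auto
  finally show ?thesis
    unfolding K_def by simp
qed

end
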